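(* Let $r, s, m, n$ be positive integers, let $f: [nm] \rightarrow \{-r,s\}$ be a function, and let $q = \frac{1}{n} f([nm])$. For $1\le i\le m$ let $I_i=\{(i-1)n+1,(i-1)n+2,\dots,in\}$. Then $[nm]$ can be decomposed into $n$ disjoint $(2n-1)$-bounded gap sequences $S_1, S_2, \ldots, S_n$, each of cardinality $m$, such that \[\lambda(q,r,s,m) \le f(S_j) \le \Lambda(q,r,s,m)\] and $|S_j \cap I_i| =1$ for all $1 \le j \le n$ and all $1 \le i \le m$.
   Context: $[N]=\{1,\dots,N\}$; $f(Y)=\sum_{y\in Y}f(y)$. A $d$-bounded gap sequence is a set of integers $a_1<a_2<\dots<a_k$ with $a_{i+1}-a_i\le d$ for all $1\le i\le k-1$. $L(r,s,m)=\{-rx+sy : x,y\in\mathbb{Z}, x,y\ge 0, x+y=m\}$, and for real $q\in[-rm,sm]$, $\lambda(q,r,s,m)=\max\{p\in L(r,s,m): p\le q\}$ and $\Lambda(q,r,s,m)=\min\{p\in L(r,s,m): p\ge q\}$. *)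

theory Defs
  imports Complex_Main
begin

definition bounded_gap_seq :: "int \<Rightarrow> int set \<Rightarrow> bool" where
  "bounded_gap_seq d S \<longleftrightarrow> finite S \<and>
     (let xs = sorted_list_of_set S in
        \<forall>i. Suc i < length xs \<longrightarrow> xs ! (Suc i) - xs ! i \<le> d)"

definition Lset :: "int \<Rightarrow> int \<Rightarrow> nat \<Rightarrow> int set" where
  "Lset r s m = {- r * int x + s * int y | x y. x + y = m}"

definition lam :: "real \<Rightarrow> int \<Rightarrow> int \<Rightarrow> nat \<Rightarrow> int" where
  "lam q r s m = Max {p \<in> Lset r s m. real_of_int p \<le> q}"

definition Lam :: "real \<Rightarrow> int \<Rightarrow> int \<Rightarrow> nat \<Rightarrow> int" where
  "Lam q r s m = Min {p \<in> Lset r s m. real_of_int p \<ge> q}"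

definition block :: "nat \<Rightarrow> nat \<Rightarrow> int set" where
  "block n i = {int ((i - 1) * n + 1) .. int (i * n)}"

end

theory Submission
  imports Defs
begin

text \<open>Call \<open>x\<close> an \<open>s\<close>-position if \<open>f x = s\<close>, and let \<open>Y\<close> be the number of
  \<open>s\<close>-positions. Label the positions so that every block receives \<open>n\<close> consecutive labels:
  first its \<open>s\<close>-positions, labelled by their rank among all \<open>s\<close>-positions, then its other
  positions. The positions whose label is \<open>j - 1\<close> modulo \<open>n\<close> form a set \<open>S\<^sub>j\<close> meeting every
  block exactly once, hence a \<open>(2n-1)\<close>-bounded gap sequence of length \<open>m\<close>. Its \<open>s\<close>-positions
  are those whose rank is \<open>j - 1\<close> modulo \<open>n\<close>, so their number \<open>k\<close> satisfies \<open>|k - Y/n| < 1\<close>.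
  Finally \<open>f(S\<^sub>j) = (r+s)k - rm\<close> and \<open>q = (r+s)Y/n - rm\<close>, while \<open>\<lambda>\<close> and \<open>\<Lambda>\<close> are the values
  of \<open>z \<mapsto> (r+s)z - rm\<close> at \<open>\<lfloor>Y/n\<rfloor>\<close> and \<open>\<lceil>Y/n\<rceil>\<close>.\<close>

definition count_sat :: "(int \<Rightarrow> bool) \<Rightarrow> int \<Rightarrow> int \<Rightarrow> nat" where
  "count_sat P a b = card {y \<in> {a..<b}. P y}"

lemma count_sat_split:
  assumes "a \<le> b" "b \<le> c"
  shows "count_sat P a c = count_sat P a b + count_sat P b c"
proof -
  have "{y \<in> {a..<c}. P y} = {y \<in> {a..<b}. P y} \<union> {y \<in> {b..<c}. P y}"
    using assms by auto
  moreover have "finite {y \<in> {a..<b}. P y}" "finite {y \<in> {b..<c}. P y}"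
    by (auto intro: finite_subset[of _ "{a..<b}"] finite_subset[of _ "{b..<c}"])
  ultimately show ?thesis
    unfolding count_sat_def by (simp add: card_Un_disjoint disjoint_iff)
qed

lemma count_sat_compl:
  assumes "a \<le> b"
  shows "count_sat P a b + count_sat (\<lambda>y. \<not> P y) a b = nat (b - a)"
proof -
  have "{a..<b} = {y \<in> {a..<b}. P y} \<union> {y \<in> {a..<b}. \<not> P y}" by auto
  then have "card {a..<b} = card {y \<in> {a..<b}. P y} + card {y \<in> {a..<b}. \<not> P y}"
    by (metis (no_types, lifting) card_Un_disjoint disjoint_iff finite_Un
        finite_atLeastLessThan_int mem_Collect_eq)
  then show ?thesis unfolding count_sat_def by simp
qed

lemma count_sat_strict_mono:
  assumes "a \<le> x" "x < b" "P x"
  shows "count_sat P a x < count_sat P a b"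
proof -
  have "x \<in> {y \<in> {x..<b}. P y}" using assms by auto
  then have "count_sat P x b > 0"
    unfolding count_sat_def by (subst card_gt_0_iff) (auto intro: finite_subset[of _ "{x..<b}"])
  then show ?thesis using count_sat_split[of a x b P] assms by simp
qed

lemma bij_betw_count_sat:
  "bij_betw (count_sat P a) {x \<in> {a..<b}. P x} {0..<count_sat P a b}"
proof -
  let ?A = "{x \<in> {a..<b}. P x}"
  have "inj_on (count_sat P a) ?A"
    by (rule inj_onI, rule ccontr)
       (auto dest: count_sat_strict_mono[of a _ _ P] simp: neq_iff)
  moreover have "count_sat P a ` ?A \<subseteq> {0..<count_sat P a b}"
    using count_sat_strict_mono[of a _ b P] by auto
  moreover have "card ?A = count_sat P a b" unfolding count_sat_def ..
  ultimately show ?thesis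
    by (simp add: bij_betw_def card_image card_subset_eq)
qed

lemma card_filter_bij_betw:
  assumes "bij_betw g A B"
  shows "card {x \<in> A. Q (g x)} = card {y \<in> B. Q y}"
proof -
  have "g ` {x \<in> A. Q (g x)} = {y \<in> B. Q y}"
    using assms by (auto simp: bij_betw_def)
  moreover have "inj_on g {x \<in> A. Q (g x)}"
    using assms by (auto simp: bij_betw_def intro: inj_on_subset)
  ultimately show ?thesis by (metis card_image)
qed

lemma card_residue_class:
  assumes "j < n"
  shows "card {t \<in> {0..<Y}. t mod n = j} = Y div n + (if j < Y mod n then 1 else 0)"
proof (induction Y)
  case 0
  then show ?case by simp
next
  case (Suc Y)
  have "{t \<in> {0..<Suc Y}. t mod n = j} =
        {t \<in> {0..<Y}. t mod n = j} \<union> (if Y mod n = j then {Y} else {})"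
    by (auto simp: less_Suc_eq)
  then have "card {t \<in> {0..<Suc Y}. t mod n = j} =
             card {t \<in> {0..<Y}. t mod n = j} + (if Y mod n = j then 1 else 0)"
    by auto
  then show ?case using Suc assms by (auto simp: mod_Suc div_Suc)
qed

lemma residue_class_balanced:
  assumes "j < n"
  shows "\<bar>int n * int (card {t \<in> {0..<Y}. t mod n = j}) - int Y\<bar> < int n"
proof -
  have "int Y = int n * int (Y div n) + int (Y mod n)"
    by (metis of_nat_add of_nat_mult div_mult_mod_eq mult.commute)
  moreover have "Y mod n < n" using assms by simp
  ultimately show ?thesis
    unfolding card_residue_class[OF assms] by (auto simp: algebra_simps)
qed

lemma mod_inj_on_window:
  fixes n :: nat
  shows "inj_on (\<lambda>u. u mod n) {B..<B + n}"
proof (rule inj_onI)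
  fix u v assume uv: "u \<in> {B..<B + n}" "v \<in> {B..<B + n}" "u mod n = v mod n"
  have "n dvd (max u v - min u v)"
    using uv(3) by (cases "u \<le> v") (auto simp: max_def min_def mod_eq_dvd_iff_nat dest: sym)
  moreover have "max u v - min u v < n" using uv(1,2) by auto
  ultimately show "u = v" by (metis dvd_imp_le neq0_conv diff_is_0_eq max_def min_def not_le le_antisym)
qed

lemma block_eq_atLeastLessThan:
  assumes "i \<ge> 1"
  shows "block n i = {int ((i - 1) * n + 1) ..< int ((i - 1) * n + 1) + int n}"
  unfolding block_def using assms le_Suc_ex by (cases i) (auto simp: algebra_simps)

lemma card_block: "i \<ge> 1 \<Longrightarrow> card (block n i) = n"
  unfolding block_eq_atLeastLessThan by simp

lemma block_subset_interval:
  assumes "i \<in> {1..m}"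
  shows "block n i \<subseteq> {1 .. int (n * m)}"
proof -
  have "i * n \<le> n * m" using assms by (simp add: mult.commute)
  then have "int (i * n) \<le> int (n * m)" by (simp only: of_nat_le_iff)
  then show ?thesis unfolding block_def by auto
qed

definition block_start :: "nat \<Rightarrow> int \<Rightarrow> int" where
  "block_start n x = (x - 1) div int n * int n + 1"

lemma block_start_le:
  assumes "n > 0"
  shows "block_start n x \<le> x \<and> x < block_start n x + int n"
proof -
  have "(x - 1) div int n * int n + (x - 1) mod int n = x - 1" by (rule div_mult_mod_eq)
  moreover have "0 \<le> (x - 1) mod int n" "(x - 1) mod int n < int n" using assms by simp_all
  ultimately show ?thesis unfolding block_start_def by linarith
qed

lemma one_le_block_start: "1 \<le> x \<Longrightarrow> 1 \<le> block_start n x"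
  unfolding block_start_def by (cases "n = 0") (auto simp: pos_imp_zdiv_nonneg_iff)

lemma ex_block_containing:
  assumes "n > 0" "x \<in> {1 .. int (n * m)}"
  shows "\<exists>i \<in> {1..m}. x \<in> block n i"
proof -
  define k where "k = (x - 1) div int n"
  have k: "0 \<le> k" "k * int n + 1 \<le> x" "x < k * int n + 1 + int n"
    using assms block_start_le[of n x] unfolding k_def block_start_def
    by (auto simp: pos_imp_zdiv_nonneg_iff)
  have "k * int n < int m * int n" using k(2) assms(2) by (simp add: mult.commute)
  then have "k < int m" using assms(1) by (simp add: mult_less_cancel_right)
  moreover have "x \<in> block n (nat k + 1)"
    using k by (subst block_eq_atLeastLessThan) auto
  ultimately show ?thesis using k(1) by (intro bexI[of _ "nat k + 1"]) auto
qed

lemma block_start_of_mem_block: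
  assumes "n > 0" "i \<ge> 1" "x \<in> block n i"
  shows "block_start n x = int ((i - 1) * n + 1)"
proof -
  define k where "k = x - int ((i - 1) * n + 1)"
  have "0 \<le> k" "k < int n"
    using assms(3) unfolding k_def block_eq_atLeastLessThan[OF assms(2)] by auto
  moreover have "x - 1 = k + int (i - 1) * int n" unfolding k_def by simp
  ultimately have "(x - 1) div int n = int (i - 1)" using assms(1) by simp
  then show ?thesis unfolding block_start_def by simp
qed

section \<open>Labelling the blocks\<close>

definition block_label :: "nat \<Rightarrow> (int \<Rightarrow> bool) \<Rightarrow> int \<Rightarrow> nat" where
  "block_label n P x =
     (if P x then count_sat P 1 x
      else count_sat P 1 (block_start n x + int n)
             + count_sat (\<lambda>y. \<not> P y) (block_start n x) x)"

lemma block_label_window: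
  assumes "n > 0" "1 \<le> x"
  shows "block_label n P x \<in> {count_sat P 1 (block_start n x) ..< count_sat P 1 (block_start n x) + n}"
proof -
  define a where "a = block_start n x"
  have x: "1 \<le> a" "a \<le> x" "x < a + int n"
    using assms block_start_le one_le_block_start unfolding a_def by auto
  have split_x: "count_sat P 1 x = count_sat P 1 a + count_sat P a x"
    and split_end: "count_sat P 1 (a + int n) = count_sat P 1 a + count_sat P a (a + int n)"
    using count_sat_split[of 1 a x P] count_sat_split[of 1 a "a + int n" P] x by simp_all
  have compl: "count_sat P a (a + int n) + count_sat (\<lambda>y. \<not> P y) a (a + int n) = n"
    using count_sat_compl[of a "a + int n" P] by simp
  show ?thesis
  proof (cases "P x")
    case True
    then have "count_sat P a x < count_sat P a (a + int n)"
      using count_sat_strict_mono x by simp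
    then show ?thesis using True split_x compl unfolding block_label_def a_def by simp
  next
    case False
    then have "count_sat (\<lambda>y. \<not> P y) a x < count_sat (\<lambda>y. \<not> P y) a (a + int n)"
      using count_sat_strict_mono[of a x "a + int n" "\<lambda>y. \<not> P y"] x by simp
    then show ?thesis using False split_end compl unfolding block_label_def a_def by simp
  qed
qed

lemma block_label_neq:
  assumes "n > 0" "1 \<le> x" "x < y" "block_start n x = block_start n y"
  shows "block_label n P x \<noteq> block_label n P y"
proof -
  define a where "a = block_start n x"
  have bounds: "1 \<le> a" "a \<le> x" "y < a + int n"
    using assms block_start_le[of n] one_le_block_start unfolding a_def by (metis)+
  show ?thesis
    using count_sat_strict_mono[of 1 x y P] count_sat_strict_mono[of a x y "\<lambda>y. \<not> P y"]
      count_sat_strict_mono[of 1 x "a + int n" P] count_sat_strict_mono[of 1 y "a + int n" P]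
      bounds assms
    unfolding block_label_def a_def by auto
qed

lemma bij_betw_block_label_mod:
  assumes "n > 0" "i \<ge> 1"
  shows "bij_betw (\<lambda>x. block_label n P x mod n) (block n i) {0..<n}"
proof -
  have "inj_on (\<lambda>x. block_label n P x mod n) (block n i)"
  proof (rule inj_onI)
    fix x y assume xy: "x \<in> block n i" "y \<in> block n i"
      and mod_eq: "block_label n P x mod n = block_label n P y mod n"
    have start: "block_start n x = block_start n y"
      using block_start_of_mem_block assms xy by simp
    have "1 \<le> x" "1 \<le> y" using xy unfolding block_def atLeastAtMost_iff by linarith+
    then have "block_label n P x = block_label n P y"
      using inj_onD[OF mod_inj_on_window mod_eq] block_label_window[OF assms(1)] start by metis
    then show "x = y" using block_label_neq assms(1) start \<open>1 \<le> x\<close> \<open>1 \<le> y\<close>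
      by (metis linorder_neqE)
  qed
  moreover have "(\<lambda>x. block_label n P x mod n) ` block n i \<subseteq> {0..<n}"
    using assms by auto
  ultimately show ?thesis
    unfolding bij_betw_def using assms
    by (metis card_atLeastLessThan card_block card_image card_subset_eq diff_zero finite_atLeastLessThan)
qed

lemma card_sat_block_label_class:
  "card {x \<in> {1 .. int N}. P x \<and> block_label n P x mod n = j}
     = card {t \<in> {0..<card {x \<in> {1 .. int N}. P x}}. t mod n = j}"
proof -
  have eq: "{x \<in> {1 .. int N}. P x} = {x \<in> {1 ..< int N + 1}. P x}" by auto
  have "{x \<in> {1 .. int N}. P x \<and> block_label n P x mod n = j}
        = {x \<in> {x \<in> {1 ..< int N + 1}. P x}. count_sat P 1 x mod n = j}"
    unfolding block_label_def by auto
  then show ?thesis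
    using card_filter_bij_betw[OF bij_betw_count_sat[of P 1 "int N + 1"]]
    unfolding eq count_sat_def by simp
qed

lemma balanced_block_partition:
  assumes "n > 0"
  obtains S :: "nat \<Rightarrow> int set" where
    "(\<Union>j \<in> {1..n}. S j) = {1 .. int (n * m)}"
    "\<forall>j \<in> {1..n}. \<forall>j' \<in> {1..n}. j \<noteq> j' \<longrightarrow> S j \<inter> S j' = {}"
    "\<And>j i. j \<in> {1..n} \<Longrightarrow> i \<in> {1..m} \<Longrightarrow> card (S j \<inter> block n i) = 1"
    "\<And>j. j \<in> {1..n} \<Longrightarrow>
       \<bar>int n * int (card {x \<in> S j. P x}) - int (card {x \<in> {1 .. int (n * m)}. P x})\<bar> < int n"
proof
  let ?g = "\<lambda>x. block_label n P x mod n"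
  define S where "S j = {x \<in> {1 .. int (n * m)}. ?g x = j - 1}" for j
  show "(\<Union>j \<in> {1..n}. S j) = {1 .. int (n * m)}"
  proof
    show "{1 .. int (n * m)} \<subseteq> (\<Union>j \<in> {1..n}. S j)"
    proof
      fix x assume "x \<in> {1 .. int (n * m)}"
      moreover have "?g x < n" using assms by simp
      ultimately have "x \<in> S (?g x + 1)" "?g x + 1 \<in> {1..n}" unfolding S_def by auto
      then show "x \<in> (\<Union>j \<in> {1..n}. S j)" by blast
    qed
  qed (auto simp: S_def)
  show "\<forall>j \<in> {1..n}. \<forall>j' \<in> {1..n}. j \<noteq> j' \<longrightarrow> S j \<inter> S j' = {}"
    unfolding S_def by auto
  fix j assume j: "j \<in> {1..n}"
  show "card (S j \<inter> block n i) = 1" if "i \<in> {1..m}" for i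
  proof -
    have "S j \<inter> block n i = {x \<in> block n i. ?g x = j - 1}"
      using block_subset_interval[OF that, of n] unfolding S_def by blast
    moreover have "{t \<in> {0..<n}. t = j - 1} = {j - 1}" using j by auto
    ultimately show ?thesis
      using card_filter_bij_betw[OF bij_betw_block_label_mod[OF assms], of i "\<lambda>t. t = j - 1"] that
      by simp
  qed
  have j_less: "j - 1 < n" using j by auto
  have count: "card {x \<in> S j. P x} = card {t \<in> {0..<card {x \<in> {1 .. int (n * m)}. P x}}. t mod n = j - 1}"
    unfolding card_sat_block_label_class[symmetric] S_def by (rule arg_cong[where f = card]) auto
  show "\<bar>int n * int (card {x \<in> S j. P x}) - int (card {x \<in> {1 .. int (n * m)}. P x})\<bar> < int n"
    unfolding count by (rule residue_class_balanced[OF j_less])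
qed

section \<open>Transversals of the blocks are bounded gap sequences\<close>

lemma block_choice_bounded_gap_seq:
  assumes "\<forall>i \<in> {1..m}. e i \<in> block n i"
  shows "bounded_gap_seq (2 * int n - 1) (e ` {1..m}) \<and> card (e ` {1..m}) = m"
proof -
  define xs where "xs = map e [1..<m+1]"
  have lo: "int ((i - 1) * n + 1) \<le> e i" and hi: "e i \<le> int (i * n)" if "i \<in> {1..m}" for i
    using assms that unfolding block_def by auto
  have mono: "e a < e b" if "a \<in> {1..m}" "b \<in> {1..m}" "a < b" for a b
  proof -
    have "a * n \<le> (b - 1) * n" using that by (intro mult_right_mono) auto
    then show ?thesis using lo[OF that(2)] hi[OF that(1)] by linarith
  qed
  have "sorted_wrt (<) xs" unfolding xs_def sorted_wrt_map
    by (rule sorted_wrt_mono_rel[OF _ sorted_wrt_upt]) (auto intro: mono)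
  then have distinct: "distinct xs" and "sorted xs" by (auto simp: strict_sorted_iff)
  moreover have set_xs: "set xs = e ` {1..m}" unfolding xs_def by auto
  ultimately have sorted: "sorted_list_of_set (e ` {1..m}) = xs"
    by (metis sorted_list_of_set.idem_if_sorted_distinct)
  have len: "length xs = m" and nth: "\<And>i. i < m \<Longrightarrow> xs ! i = e (i + 1)"
    unfolding xs_def by (auto simp del: upt_Suc)
  have "xs ! Suc k - xs ! k \<le> 2 * int n - 1" if "Suc k < m" for k
    using nth[of k] nth[of "Suc k"] hi[of "k + 2"] lo[of "k + 1"] that
    by (simp add: algebra_simps)
  moreover have "card (e ` {1..m}) = m"
    using distinct_card[OF distinct] len set_xs by simp
  ultimately show ?thesis unfolding bounded_gap_seq_def Let_def sorted len by auto
qed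

lemma block_transversal_bounded_gap_seq:
  assumes "n > 0" "S \<subseteq> {1 .. int (n * m)}"
    and "\<And>i. i \<in> {1..m} \<Longrightarrow> card (S \<inter> block n i) = 1"
  shows "bounded_gap_seq (2 * int n - 1) S \<and> card S = m"
proof -
  have "\<forall>i \<in> {1..m}. \<exists>x. S \<inter> block n i = {x}"
    using assms(3) by (simp add: card_1_singleton_iff)
  then obtain e where e: "\<And>i. i \<in> {1..m} \<Longrightarrow> S \<inter> block n i = {e i}"
    by metis
  have "S = e ` {1..m}"
  proof
    show "S \<subseteq> e ` {1..m}"
      using e ex_block_containing[OF assms(1)] assms(2) by blast
  qed (use e in blast)
  moreover have "\<forall>i \<in> {1..m}. e i \<in> block n i" using e by blast
  ultimately show ?thesis using block_choice_bounded_gap_seq by simp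
qed

section \<open>Two-valued sums between \<open>\<lambda>\<close> and \<open>\<Lambda>\<close>\<close>

lemma sum_two_valued:
  fixes f :: "'a \<Rightarrow> int"
  assumes "finite A" "\<forall>x \<in> A. f x \<in> {- r, s}"
  shows "sum f A = (r + s) * int (card {x \<in> A. f x = s}) - r * int (card A)"
proof -
  have "sum f A = (\<Sum>x \<in> A. (if f x = s then r + s else 0) - r)"
    using assms(2) by (intro sum.cong) auto
  also have "\<dots> = (\<Sum>x \<in> A. if f x = s then r + s else 0) - (\<Sum>x \<in> A. r)"
    by (rule sum_subtractf)
  also have "(\<Sum>x \<in> A. if f x = s then r + s else 0) = (r + s) * int (card {x \<in> A. f x = s})"
    using assms(1) by (simp add: sum.inter_filter[symmetric])
  finally show ?thesis by simp
qed

lemma Lset_eq_affine: "Lset r s m = (\<lambda>z. (r + s) * z - r * int m) ` {0 .. int m}"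
proof (rule set_eqI, rule iffI)
  fix p assume "p \<in> Lset r s m"
  then obtain x y where "p = - r * int x + s * int y" "x + y = m" unfolding Lset_def by blast
  then show "p \<in> (\<lambda>z. (r + s) * z - r * int m) ` {0 .. int m}"
    by (intro image_eqI[of _ _ "int y"]) (auto simp: algebra_simps)
next
  fix p assume "p \<in> (\<lambda>z. (r + s) * z - r * int m) ` {0 .. int m}"
  then obtain z where "0 \<le> z" "z \<le> int m" "p = (r + s) * z - r * int m" by auto
  then show "p \<in> Lset r s m" unfolding Lset_def
    by (intro CollectI exI[of _ "m - nat z"] exI[of _ "nat z"]) (auto simp: algebra_simps of_nat_diff)
qed

lemma lam_affine:
  assumes "r + s > 0" "0 \<le> t" "t \<le> real m"
  shows "lam (of_int (r + s) * t - of_int r * real m) r s m = (r + s) * \<lfloor>t\<rfloor> - r * int m"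
  unfolding lam_def
proof (rule Max_eqI)
  show "finite {p \<in> Lset r s m. real_of_int p \<le> of_int (r + s) * t - of_int r * real m}"
    unfolding Lset_eq_affine by simp
next
  fix p assume "p \<in> {p \<in> Lset r s m. real_of_int p \<le> of_int (r + s) * t - of_int r * real m}"
  then obtain z where z: "p = (r + s) * z - r * int m"
    and "real_of_int p \<le> of_int (r + s) * t - of_int r * real m"
    unfolding Lset_eq_affine by blast
  then have "of_int (r + s) * of_int z \<le> of_int (r + s) * t" by simp
  then have "z \<le> \<lfloor>t\<rfloor>" using assms(1) by (simp add: le_floor_iff mult_le_cancel_left_pos)
  then show "p \<le> (r + s) * \<lfloor>t\<rfloor> - r * int m" unfolding z using assms(1) by simp
next
  have "of_int (r + s) * of_int \<lfloor>t\<rfloor> \<le> of_int (r + s) * t" using assms(1) by simp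
  moreover have "\<lfloor>t\<rfloor> \<in> {0 .. int m}" using assms(2,3) by (simp add: floor_le_iff)
  ultimately show "(r + s) * \<lfloor>t\<rfloor> - r * int m
      \<in> {p \<in> Lset r s m. real_of_int p \<le> of_int (r + s) * t - of_int r * real m}"
    unfolding Lset_eq_affine by auto
qed

lemma Lam_affine:
  assumes "r + s > 0" "0 \<le> t" "t \<le> real m"
  shows "Lam (of_int (r + s) * t - of_int r * real m) r s m = (r + s) * \<lceil>t\<rceil> - r * int m"
  unfolding Lam_def
proof (rule Min_eqI)
  show "finite {p \<in> Lset r s m. real_of_int p \<ge> of_int (r + s) * t - of_int r * real m}"
    unfolding Lset_eq_affine by simp
next
  fix p assume "p \<in> {p \<in> Lset r s m. real_of_int p \<ge> of_int (r + s) * t - of_int r * real m}"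
  then obtain z where z: "p = (r + s) * z - r * int m"
    and "real_of_int p \<ge> of_int (r + s) * t - of_int r * real m"
    unfolding Lset_eq_affine by blast
  then have "of_int (r + s) * t \<le> of_int (r + s) * of_int z" by simp
  then have "\<lceil>t\<rceil> \<le> z" using assms(1) by (simp add: ceiling_le_iff mult_le_cancel_left_pos)
  then show "(r + s) * \<lceil>t\<rceil> - r * int m \<le> p" unfolding z using assms(1) by simp
next
  have "of_int (r + s) * of_int \<lceil>t\<rceil> \<ge> of_int (r + s) * t" using assms(1) by simp
  moreover have "\<lceil>t\<rceil> \<in> {0 .. int m}" using assms(2,3) by (simp add: le_ceiling_iff ceiling_le_iff)
  ultimately show "(r + s) * \<lceil>t\<rceil> - r * int m
      \<in> {p \<in> Lset r s m. real_of_int p \<ge> of_int (r + s) * t - of_int r * real m}"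
    unfolding Lset_eq_affine by auto
qed

lemma two_valued_sum_between_lam_Lam:
  fixes f :: "'a \<Rightarrow> int"
  assumes "r + s > 0" "finite A" "card A = m" "\<forall>x \<in> A. f x \<in> {- r, s}"
    and "0 \<le> t" "t \<le> real m" "\<bar>real (card {x \<in> A. f x = s}) - t\<bar> < 1"
  defines "q \<equiv> of_int (r + s) * t - of_int r * real m"
  shows "lam q r s m \<le> sum f A \<and> sum f A \<le> Lam q r s m"
proof -
  let ?k = "int (card {x \<in> A. f x = s})"
  have "\<lfloor>t\<rfloor> \<le> ?k" "?k \<le> \<lceil>t\<rceil>" using assms(7) by (auto simp: floor_le_iff le_ceiling_iff)
  then show ?thesis
    unfolding q_def lam_affine[OF assms(1,5,6)] Lam_affine[OF assms(1,5,6)]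
      sum_two_valued[OF assms(2,4)] assms(3)
    using assms(1) by simp
qed

lemma abs_diff_div_less_one:
  fixes k y n :: nat
  assumes "n > 0" "\<bar>int n * int k - int y\<bar> < int n"
  shows "\<bar>real k - real y / real n\<bar> < 1"
proof -
  have "real n * real k - real y = real n * (real k - real y / real n)"
    using assms(1) by (simp add: field_simps)
  then have "real n * \<bar>real k - real y / real n\<bar> = of_int \<bar>int n * int k - int y\<bar>"
    by (simp add: abs_mult)
  also have "\<dots> < real n" using assms(2) by linarith
  finally show ?thesis using assms(1) by simp
qed

theorem theorem4p6:
  fixes r s :: int and m n :: nat and f :: "int \<Rightarrow> int"
  assumes "r > 0" "s > 0" "m > 0" "n > 0"
    and "\<forall>x \<in> {1 .. int (n * m)}. f x \<in> {- r, s}"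
  defines "q \<equiv> real_of_int (\<Sum>x \<in> {1 .. int (n * m)}. f x) / real n"
  shows "\<exists>S :: nat \<Rightarrow> int set.
           (\<Union>j \<in> {1..n}. S j) = {1 .. int (n * m)} \<and>
           (\<forall>j \<in> {1..n}. \<forall>j' \<in> {1..n}. j \<noteq> j' \<longrightarrow> S j \<inter> S j' = {}) \<and>
           (\<forall>j \<in> {1..n}.
              bounded_gap_seq (2 * int n - 1) (S j) \<and>
              card (S j) = m \<and>
              lam q r s m \<le> (\<Sum>x \<in> S j. f x) \<and>
              (\<Sum>x \<in> S j. f x) \<le> Lam q r s m \<and>
              (\<forall>i \<in> {1..m}. card (S j \<inter> block n i) = 1))"
proof -
  let ?N = "{1 .. int (n * m)}"
  define Y where "Y = card {x \<in> ?N. f x = s}"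
  obtain S where cover: "(\<Union>j \<in> {1..n}. S j) = ?N"
    and disjoint: "\<forall>j \<in> {1..n}. \<forall>j' \<in> {1..n}. j \<noteq> j' \<longrightarrow> S j \<inter> S j' = {}"
    and single: "\<And>j i. j \<in> {1..n} \<Longrightarrow> i \<in> {1..m} \<Longrightarrow> card (S j \<inter> block n i) = 1"
    and balanced: "\<And>j. j \<in> {1..n} \<Longrightarrow> \<bar>int n * int (card {x \<in> S j. f x = s}) - int Y\<bar> < int n"
    using balanced_block_partition[OF \<open>n > 0\<close>, of m "\<lambda>x. f x = s"] unfolding Y_def by blast
  have "Y \<le> card ?N" unfolding Y_def by (intro card_mono) auto
  then have "real Y \<le> real m * real n" by (simp add: nat_mult_distrib mult.commute flip: of_nat_mult)
  then have t: "0 \<le> real Y / real n" "real Y / real n \<le> real m"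
    using \<open>n > 0\<close> by (auto simp: field_simps)
  have total: "(\<Sum>x \<in> ?N. f x) = (r + s) * int Y - r * int (n * m)"
    using sum_two_valued[OF _ assms(5)] unfolding Y_def by simp
  have q: "q = of_int (r + s) * (real Y / real n) - of_int r * real m"
    unfolding q_def total using \<open>n > 0\<close> by (simp add: field_simps)
  have "bounded_gap_seq (2 * int n - 1) (S j) \<and> card (S j) = m \<and>
        lam q r s m \<le> (\<Sum>x \<in> S j. f x) \<and> (\<Sum>x \<in> S j. f x) \<le> Lam q r s m \<and>
        (\<forall>i \<in> {1..m}. card (S j \<inter> block n i) = 1)" if j: "j \<in> {1..n}" for j
  proof -
    have sub: "S j \<subseteq> ?N" using cover j by blast
    have gap: "bounded_gap_seq (2 * int n - 1) (S j) \<and> card (S j) = m"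
      by (rule block_transversal_bounded_gap_seq[OF \<open>n > 0\<close> sub single[OF j]])
    moreover have "lam q r s m \<le> (\<Sum>x \<in> S j. f x) \<and> (\<Sum>x \<in> S j. f x) \<le> Lam q r s m"
    proof (unfold q, rule two_valued_sum_between_lam_Lam)
      show "finite (S j)" using sub finite_subset by blast
      show "\<forall>x \<in> S j. f x \<in> {- r, s}" using sub assms(5) by blast
      show "\<bar>real (card {x \<in> S j. f x = s}) - real Y / real n\<bar> < 1"
        by (rule abs_diff_div_less_one[OF \<open>n > 0\<close> balanced[OF j]])
    qed (use assms(1,2) gap t in simp_all)
    ultimately show ?thesis using single[OF j] by blast
  qed
  then show ?thesis using cover disjoint by (intro exI[of _ S]) blast
qed

end
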